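(* Let $\mathbf{v}=(v_1,\dots,v_d)\in\mathbb{R}^d$. Then $$\lim_{u\to\infty}\frac1u\int_{\Delta_d}\log\left(\frac1d\sum_{j=1}^d e^{ux_j+v_j}\right)d\mathbf{x}=\int_{\Delta_d}\max(\mathbf{x})\,d\mathbf{x}=\frac{1}{(d+1)!}\sum_{j=1}^d\frac1j.$$
   Context: $\Delta_d:=\{\mathbf{x}\in\mathbb{R}^d_{\ge0}:\sum_{j=1}^d x_j\le1\}$ is the standard $d$-simplex, and $\max(\mathbf{x}):=\max\{x_1,\dots,x_d\}$. *)

theory Defs
  imports "HOL-Analysis.Analysis"
begin

text \<open>Standard d-simplex in R^d, with d = CARD('n).\<close>
definition std_simplex :: "(real ^ 'n::finite) set" where
  "std_simplex = {x. (\<forall>i. 0 \<le> x $ i) \<and> (\<Sum>i\<in>UNIV. x $ i) \<le> 1}"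

definition vmax :: "real ^ 'n::finite \<Rightarrow> real" where
  "vmax x = Max (range (\<lambda>j. x $ j))"

end

theory Submission
  imports Defs
begin

(*
  Pointwise on the simplex, the logarithm of the mean of the exp (u x_j + v_j) differs from
  u max(x) by at most ln d + |v|, so after division by u the integrals converge to the
  integral of max(x).

  That integral is computed in the product measure on the coordinates. Inclusion-exclusion
  writes max(x) as the alternating sum of min(x_K) over the nonempty index sets K. By the
  layer-cake formula, the integral of min(x_K) over the simplex is the integral over s >= 0
  of the volume of {x in simplex. x_i >= s for i in K}, a translate of the simplex scaled
  by 1 - |K| s; this gives 1 / (|K| (d+1)!). Finally the alternating binomial sum
  sum_k (-1)^(k+1) (d choose k) / k is the harmonic number H_d.
*)

section \<open>Volumes of truncated simplices\<close>

definition floored_simplex :: "'a set \<Rightarrow> 'a set \<Rightarrow> real \<Rightarrow> real \<Rightarrow> ('a \<Rightarrow> real) set" where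
  "floored_simplex A K s t = {x. (\<forall>i\<in>A. 0 \<le> x i) \<and> (\<forall>i\<in>K. s \<le> x i) \<and> sum x A \<le> t}"

lemma sets_floored_simplex [measurable]:
  assumes "finite A" "K \<subseteq> A"
  shows "floored_simplex A K s t \<inter> space (Pi\<^sub>M A (\<lambda>_. lborel)) \<in> sets (Pi\<^sub>M A (\<lambda>_. lborel))"
proof -
  have [measurable]: "(\<lambda>x. sum x A) \<in> borel_measurable (Pi\<^sub>M A (\<lambda>_. lborel))"
    using assms(1) by measurable
  have "floored_simplex A K s t \<inter> space (Pi\<^sub>M A (\<lambda>_. lborel)) =
     {x \<in> space (Pi\<^sub>M A (\<lambda>_. lborel)). (\<forall>i\<in>A. 0 \<le> x i) \<and> (\<forall>i\<in>A. i \<in> K \<longrightarrow> s \<le> x i) \<and> sum x A \<le> t}"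
    using assms(2) by (auto simp: floored_simplex_def)
  also have "\<dots> \<in> sets (Pi\<^sub>M A (\<lambda>_. lborel))"
    using assms(1) by measurable
  finally show ?thesis .
qed

lemma fun_upd_in_floored_simplex_insert_iff:
  fixes s t :: real
  assumes "finite A" "b \<notin> A" "0 \<le> s"
  shows "x(b := y) \<in> floored_simplex (insert b A) K s t \<longleftrightarrow>
           (if b \<in> K then s else 0) \<le> y \<and> x \<in> floored_simplex A (K - {b}) s (t - y)"
proof -
  have "sum (x(b := y)) A = sum x A"
    using assms(2) by (intro sum.cong) auto
  then have "sum (x(b := y)) (insert b A) = y + sum x A"
    using assms(1,2) by simp
  then show ?thesis
    using assms(2,3) by (auto simp: floored_simplex_def)
qed

lemma nn_integral_scaled_power_Icc:
  fixes b c l :: real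
  assumes "0 \<le> b" "l \<le> c"
  shows "(\<integral>\<^sup>+ y. ennreal ((b * (c - y)) ^ n / fact n) * indicator {l..c} y \<partial>lborel)
           = ennreal (b ^ n * (c - l) ^ Suc n / fact (Suc n))"
proof -
  have "(\<integral>\<^sup>+ y. ennreal ((b * (c - y)) ^ n / fact n) * indicator {l..c} y \<partial>lborel)
       = ennreal (- (b ^ n * (c - c) ^ Suc n / fact (Suc n)) - (- (b ^ n * (c - l) ^ Suc n / fact (Suc n))))"
  proof (rule nn_integral_FTC_Icc)
    fix y assume y: "y \<in> {l..c}"
    have "((\<lambda>y. - (b ^ n * (c - y) ^ Suc n / fact (Suc n))) has_real_derivative
            b ^ n * (real (Suc n) * (c - y) ^ n) / fact (Suc n)) (at y)"
      by (rule derivative_eq_intros refl | simp)+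
    then show "((\<lambda>y. - (b ^ n * (c - y) ^ Suc n / fact (Suc n))) has_real_derivative
                 (b * (c - y)) ^ n / fact n) (at y)"
      by (simp add: power_mult_distrib del: of_nat_Suc)
    show "0 \<le> (b * (c - y)) ^ n / fact n"
      using assms(1) y by simp
  qed (use assms(2) in auto)
  then show ?thesis by simp
qed

lemma emeasure_floored_simplex_insert:
  fixes s t :: real
  assumes "finite A" "b \<notin> A" "K \<subseteq> insert b A" "0 \<le> s"
  defines "M \<equiv> \<lambda>A. Pi\<^sub>M A (\<lambda>_. lborel :: real measure)"
  shows "emeasure (M (insert b A)) (floored_simplex (insert b A) K s t \<inter> space (M (insert b A))) =
           (\<integral>\<^sup>+ y. indicator {if b \<in> K then s else 0..} y *
                    emeasure (M A) (floored_simplex A (K - {b}) s (t - y) \<inter> space (M A)) \<partial>lborel)"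
proof -
  let ?S = "\<lambda>A K t. floored_simplex A K s t \<inter> space (M A)"
  interpret product_sigma_finite "\<lambda>_. lborel :: real measure"
    by standard
  have "emeasure (M (insert b A)) (?S (insert b A) K t) =
          (\<integral>\<^sup>+ x. indicator (?S (insert b A) K t) x \<partial>M (insert b A))"
    using assms unfolding M_def by (intro nn_integral_indicator[symmetric]) auto
  also have "\<dots> = (\<integral>\<^sup>+ y. \<integral>\<^sup>+ x. indicator (?S (insert b A) K t) (x(b := y)) \<partial>M A \<partial>lborel)"
    using assms unfolding M_def by (intro product_nn_integral_insert_rev) auto
  also have "\<dots> = (\<integral>\<^sup>+ y. \<integral>\<^sup>+ x. indicator {if b \<in> K then s else 0..} y * indicator (?S A (K - {b}) (t - y)) x
                      \<partial>M A \<partial>lborel)"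
    using assms fun_upd_in_floored_simplex_insert_iff[OF assms(1,2,4)]
    by (intro nn_integral_cong) (auto simp: M_def indicator_def space_PiM PiE_def extensional_def)
  also have "\<dots> = (\<integral>\<^sup>+ y. indicator {if b \<in> K then s else 0..} y * emeasure (M A) (?S A (K - {b}) (t - y)) \<partial>lborel)"
    using assms unfolding M_def by (intro nn_integral_cong nn_integral_cmult_indicator sets_floored_simplex) auto
  finally show ?thesis .
qed

lemma emeasure_floored_simplex:
  fixes s t :: real
  assumes "finite A" "K \<subseteq> A" "0 \<le> s"
  shows "emeasure (Pi\<^sub>M A (\<lambda>_. lborel)) (floored_simplex A K s t \<inter> space (Pi\<^sub>M A (\<lambda>_. lborel))) =
           ennreal (if card K * s \<le> t then (t - card K * s) ^ card A / fact (card A) else 0)"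
  using assms(1,2)
proof (induction A arbitrary: K t rule: finite_induct)
  case empty
  then have "floored_simplex {} K s t \<inter> space (Pi\<^sub>M {} (\<lambda>_. lborel)) =
               (if 0 \<le> t then {\<lambda>_. undefined} else {})"
    by (auto simp: floored_simplex_def space_PiM)
  with empty show ?case by (simp add: PiM_empty)
next
  case (insert b A K t)
  define l where "l = (if b \<in> K then s else 0)"
  define c where "c = t - card (K - {b}) * s"
  have KA: "K - {b} \<subseteq> A" using insert.prems by auto
  have "finite K" using insert.prems insert.hyps(1) finite_subset by blast
  have c_l: "c - l = t - card K * s"
  proof (cases "b \<in> K")
    case True
    with \<open>finite K\<close> have "card K = Suc (card (K - {b}))" by (rule card.remove)
    with True show ?thesis by (simp add: c_def l_def algebra_simps)
  qed (simp add: c_def l_def)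
  have "emeasure (Pi\<^sub>M (insert b A) (\<lambda>_. lborel))
          (floored_simplex (insert b A) K s t \<inter> space (Pi\<^sub>M (insert b A) (\<lambda>_. lborel))) =
        (\<integral>\<^sup>+ y. ennreal ((1 * (c - y)) ^ card A / fact (card A)) * indicator {l..c} y \<partial>lborel)"
    unfolding emeasure_floored_simplex_insert[OF insert.hyps insert.prems assms(3)] insert.IH[OF KA]
    by (intro nn_integral_cong) (auto simp: indicator_def c_def l_def algebra_simps)
  also have "\<dots> = ennreal (if card K * s \<le> t
                         then (t - card K * s) ^ card (insert b A) / fact (card (insert b A)) else 0)"
    using nn_integral_scaled_power_Icc[of 1 l c "card A"] insert.hyps c_l by (cases "l \<le> c") simp_all
  finally show ?case .
qed

lemma floored_simplex_iff_Min:
  assumes "finite K" "K \<noteq> {}" "K \<subseteq> A"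
  shows "x \<in> floored_simplex A K s t \<longleftrightarrow> x \<in> floored_simplex A {} 0 t \<and> s \<le> Min (x ` K)"
  using assms by (auto simp: floored_simplex_def Min_ge_iff)

lemma pred_in_floored_simplex:
  assumes "finite A" "K \<subseteq> A"
  shows "Measurable.pred (Pi\<^sub>M A (\<lambda>_. lborel) \<Otimes>\<^sub>M lborel) (\<lambda>p. fst p \<in> floored_simplex A K (snd p) t)"
proof -
  have [measurable]: "(\<lambda>p. sum (fst p) A) \<in> borel_measurable (Pi\<^sub>M A (\<lambda>_. lborel) \<Otimes>\<^sub>M lborel)"
    using assms(1) by measurable
  have "(\<lambda>p. fst p \<in> floored_simplex A K (snd p) t) =
          (\<lambda>p. (\<forall>i\<in>A. 0 \<le> fst p i) \<and> (\<forall>i\<in>A. i \<in> K \<longrightarrow> snd p \<le> fst p i) \<and> sum (fst p) A \<le> t)"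
    using assms(2) by (auto simp: floored_simplex_def)
  then show ?thesis
    using assms(1) by simp
qed

lemma nn_integral_Min_on_simplex_layer_cake:
  fixes A K :: "'a set"
  assumes A: "finite A" and KA: "K \<subseteq> A" and K: "K \<noteq> {}"
  defines "M \<equiv> Pi\<^sub>M A (\<lambda>_. lborel :: real measure)"
  shows "(\<integral>\<^sup>+x. indicator (floored_simplex A {} 0 1 \<inter> space M) x * ennreal (Min (x ` K)) \<partial>M) =
           (\<integral>\<^sup>+s. indicator {0..} s * emeasure M (floored_simplex A K s 1 \<inter> space M) \<partial>lborel)"
proof -
  define G where "G = {p \<in> space (M \<Otimes>\<^sub>M lborel). 0 \<le> snd p \<and> fst p \<in> floored_simplex A K (snd p) 1}"
  have "finite K" using A KA finite_subset by blast
  interpret PS: product_sigma_finite "\<lambda>_. lborel :: real measure" by standard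
  interpret M: sigma_finite_measure M unfolding M_def by (rule PS.sigma_finite[OF A])
  interpret pair_sigma_finite M "lborel :: real measure" by standard
  have [measurable]: "Measurable.pred (M \<Otimes>\<^sub>M lborel) (\<lambda>p. fst p \<in> floored_simplex A K (snd p) 1)"
    unfolding M_def using A KA by (rule pred_in_floored_simplex)
  have x_section: "(\<integral>\<^sup>+s. indicator G (x, s) \<partial>lborel) =
                     indicator (floored_simplex A {} 0 1 \<inter> space M) x * ennreal (Min (x ` K))"
    if "x \<in> space M" for x
  proof -
    have "indicator G (x, s) =
            indicator (floored_simplex A {} 0 1 \<inter> space M) x * (indicator {0..Min (x ` K)} s :: ennreal)" for s
      using that by (auto simp: indicator_def G_def space_pair_measure floored_simplex_iff_Min[OF \<open>finite K\<close> K KA])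
    then show ?thesis
      by (simp add: nn_integral_cmult_indicator emeasure_lborel_Icc_eq ennreal_neg)
  qed
  have s_section: "(\<integral>\<^sup>+x. indicator G (x, s) \<partial>M) = indicator {0..} s * emeasure M (floored_simplex A K s 1 \<inter> space M)"
    for s
  proof -
    have "indicator G (x, s) = (indicator {0..} s * indicator (floored_simplex A K s 1 \<inter> space M) x :: ennreal)"
      if "x \<in> space M" for x
      using that by (auto simp: indicator_def G_def space_pair_measure)
    then have "(\<integral>\<^sup>+x. indicator G (x, s) \<partial>M) =
                 (\<integral>\<^sup>+x. indicator {0..} s * indicator (floored_simplex A K s 1 \<inter> space M) x \<partial>M)"
      by (intro nn_integral_cong) simp
    also have "\<dots> = indicator {0..} s * emeasure M (floored_simplex A K s 1 \<inter> space M)"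
      unfolding M_def using A KA by (intro nn_integral_cmult_indicator sets_floored_simplex)
    finally show ?thesis .
  qed
  have "(\<integral>\<^sup>+x. indicator (floored_simplex A {} 0 1 \<inter> space M) x * ennreal (Min (x ` K)) \<partial>M) =
          (\<integral>\<^sup>+x. \<integral>\<^sup>+s. indicator G (x, s) \<partial>lborel \<partial>M)"
    by (intro nn_integral_cong) (simp add: x_section)
  also have "\<dots> = (\<integral>\<^sup>+s. \<integral>\<^sup>+x. indicator G (x, s) \<partial>M \<partial>lborel)"
    using Fubini'[of "\<lambda>x s. indicator G (x, s)"] by (simp add: G_def)
  finally show ?thesis
    by (simp add: s_section)
qed

lemma nn_integral_Min_on_simplex:
  fixes A K :: "'a set"
  assumes A: "finite A" and KA: "K \<subseteq> A" and K: "K \<noteq> {}"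
  shows "(\<integral>\<^sup>+x. indicator (floored_simplex A {} 0 1 \<inter> space (Pi\<^sub>M A (\<lambda>_. lborel))) x * ennreal (Min (x ` K))
            \<partial>Pi\<^sub>M A (\<lambda>_. lborel)) = ennreal (1 / (card K * fact (Suc (card A))))"
proof -
  define k where "k = real (card K)"
  define n where "n = card A"
  have "0 < k"
    using A KA K finite_subset by (fastforce simp: k_def card_gt_0_iff)
  have slice: "indicator {0..} s *
                 emeasure (Pi\<^sub>M A (\<lambda>_. lborel)) (floored_simplex A K s 1 \<inter> space (Pi\<^sub>M A (\<lambda>_. lborel)))
                 = ennreal ((k * (1 / k - s)) ^ n / fact n) * indicator {0..1 / k} s" for s
  proof -
    have "k * (1 / k - s) = 1 - k * s" and "k * s \<le> 1 \<longleftrightarrow> s \<le> 1 / k"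
      using \<open>0 < k\<close> by (auto simp: field_simps)
    then show ?thesis
      using emeasure_floored_simplex[OF A KA, of s 1] by (simp add: k_def n_def indicator_def)
  qed
  have "(\<integral>\<^sup>+x. indicator (floored_simplex A {} 0 1 \<inter> space (Pi\<^sub>M A (\<lambda>_. lborel))) x * ennreal (Min (x ` K))
            \<partial>Pi\<^sub>M A (\<lambda>_. lborel)) =
          (\<integral>\<^sup>+s. ennreal ((k * (1 / k - s)) ^ n / fact n) * indicator {0..1 / k} s \<partial>lborel)"
    by (simp add: nn_integral_Min_on_simplex_layer_cake[OF A KA K] slice)
  also have "\<dots> = ennreal (k ^ n * (1 / k - 0) ^ Suc n / fact (Suc n))"
    using \<open>0 < k\<close> by (intro nn_integral_scaled_power_Icc) auto
  also have "\<dots> = ennreal (1 / (card K * fact (Suc (card A))))"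
    using \<open>0 < k\<close> by (simp add: k_def n_def power_divide del: of_nat_Suc fact_Suc)
  finally show ?thesis .
qed

section \<open>Inclusion-exclusion for the maximum\<close>

lemma sum_nonempty_subsets_insert:
  assumes "finite A" "b \<notin> A"
  shows "(\<Sum>K \<in> Pow (insert b A) - {{}}. f K) =
           f {b} + (\<Sum>K \<in> Pow A - {{}}. f K) + (\<Sum>K \<in> Pow A - {{}}. f (insert b K))"
proof -
  have split: "Pow (insert b A) - {{}} = (Pow A - {{}}) \<union> insert {b} (insert b ` (Pow A - {{}}))"
    by (auto simp: Pow_insert)
  have inj: "inj_on (insert b) (Pow A - {{}})"
    using assms(2) by (auto simp: inj_on_def)
  have "(\<Sum>K \<in> Pow (insert b A) - {{}}. f K) =
          (\<Sum>K \<in> Pow A - {{}}. f K) + (\<Sum>K \<in> insert {b} (insert b ` (Pow A - {{}})). f K)"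
    unfolding split using assms by (intro sum.union_disjoint) auto
  also have "(\<Sum>K \<in> insert {b} (insert b ` (Pow A - {{}})). f K) =
               f {b} + (\<Sum>K \<in> Pow A - {{}}. f (insert b K))"
    using assms by (subst sum.insert) (auto simp: sum.reindex[OF inj])
  finally show ?thesis by (simp add: ac_simps)
qed

lemma Max_eq_alternating_sum_Min:
  fixes x :: "'a \<Rightarrow> real"
  assumes "finite A" "A \<noteq> {}"
  shows "Max (x ` A) = (\<Sum>K \<in> Pow A - {{}}. (-1) ^ (card K + 1) * Min (x ` K))"
  using assms
proof (induction A arbitrary: x rule: finite_ne_induct)
  case (singleton a)
  have "Pow {a} - {{}} = {{a}}" by auto
  then show ?case by simp
next
  case (insert b A x)
  define f where "f = (\<lambda>K. (-1::real) ^ (card K + 1) * Min (x ` K))"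
  define y where "y = (\<lambda>i. min (x b) (x i))"
  have Min_y: "Min (y ` K) = Min (x ` insert b K)" if "K \<in> Pow A - {{}}" for K
  proof -
    have K: "finite K" "K \<noteq> {}" using that insert.hyps(1) finite_subset by auto
    have "min (x b) (Min (x ` K)) = Min (min (x b) ` x ` K)"
      by (rule hom_Min_commute) (use K in \<open>auto simp: min_def\<close>)
    then have "Min (y ` K) = min (x b) (Min (x ` K))"
      by (simp add: y_def image_image)
    then show ?thesis using K by simp
  qed
  have "Max (x ` insert b A) = x b + Max (x ` A) - min (x b) (Max (x ` A))"
    using insert.hyps by (simp add: max_def min_def)
  also have "min (x b) (Max (x ` A)) = Max (y ` A)"
    unfolding y_def using insert.hyps
    by (subst hom_Max_commute[where h = "min (x b)"]) (auto simp: image_image min_max_distrib1)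
  also have "\<dots> = (\<Sum>K \<in> Pow A - {{}}. (-1) ^ (card K + 1) * Min (y ` K))"
    by (rule insert.IH)
  also have "\<dots> = (\<Sum>K \<in> Pow A - {{}}. - f (insert b K))"
  proof (intro sum.cong refl)
    fix K assume K: "K \<in> Pow A - {{}}"
    then have "finite K" "b \<notin> K" using insert.hyps finite_subset by auto
    then show "(-1) ^ (card K + 1) * Min (y ` K) = - f (insert b K)"
      using Min_y[OF K] by (simp add: f_def)
  qed
  also have "Max (x ` A) = sum f (Pow A - {{}})"
    unfolding f_def by (rule insert.IH)
  finally show ?case
    using sum_nonempty_subsets_insert[OF insert.hyps(1,3), of f] by (simp add: f_def sum_negf)
qed

lemma alternating_sum_choose_Suc_eq_1:
  "(\<Sum>k\<le>n. (-1::real) ^ k * real (Suc n choose Suc k)) = 1"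
proof -
  have "(\<Sum>i\<le>Suc n. (-1::real)^i * of_nat (Suc n choose i)) = 0"
    by (rule choose_alternating_sum) simp
  then have "1 + (\<Sum>i\<le>n. (-1::real)^Suc i * of_nat (Suc n choose Suc i)) = 0"
    by (simp only: sum.atMost_Suc_shift) simp
  then show ?thesis by (simp add: sum_negf)
qed

lemma alternating_binomial_sum_eq_harmonic:
  "(\<Sum>k<n. (-1::real) ^ k * real (n choose Suc k) / real (Suc k)) = (\<Sum>k<n. 1 / real (Suc k))"
proof (induction n)
  case 0
  then show ?case by simp
next
  case (Suc n)
  \<comment> \<open>Pascal's rule splits the sum; by absorption, (n choose k) / (k + 1) = (n + 1 choose k + 1) / (n + 1),
    so one half becomes an alternating row sum of binomial coefficients.\<close>
  have "(\<Sum>k<Suc n. (-1::real) ^ k * real (Suc n choose Suc k) / real (Suc k))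
      = (\<Sum>k<Suc n. (-1::real) ^ k * real (n choose k) / real (Suc k))
        + (\<Sum>k<Suc n. (-1::real) ^ k * real (n choose Suc k) / real (Suc k))"
    by (simp add: sum.distrib[symmetric] add_divide_distrib algebra_simps)
  also have "(\<Sum>k<Suc n. (-1::real) ^ k * real (n choose Suc k) / real (Suc k))
      = (\<Sum>k<n. (-1::real) ^ k * real (n choose Suc k) / real (Suc k))"
    by simp
  also have "\<dots> = (\<Sum>k<n. 1 / real (Suc k))" by (rule Suc.IH)
  also have "(\<Sum>k<Suc n. (-1::real) ^ k * real (n choose k) / real (Suc k))
      = (\<Sum>k<Suc n. (-1::real) ^ k * real (Suc n choose Suc k) / real (Suc n))"
  proof (rule sum.cong)
    fix k
    have "real (Suc k) * real (Suc n choose Suc k) = real (Suc n) * real (n choose k)"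
      using Suc_times_binomial[of k n] by (simp only: of_nat_mult[symmetric] of_nat_eq_iff)
    then have "real (n choose k) / real (Suc k) = real (Suc n choose Suc k) / real (Suc n)"
      by (simp del: binomial_Suc_Suc add: field_simps)
    then show "(-1::real) ^ k * real (n choose k) / real (Suc k) =
                 (-1::real) ^ k * real (Suc n choose Suc k) / real (Suc n)"
      by (metis times_divide_eq_right)
  qed simp
  also have "\<dots> = (\<Sum>k\<le>n. (-1::real) ^ k * real (Suc n choose Suc k)) / real (Suc n)"
    by (simp add: sum_divide_distrib lessThan_Suc_atMost)
  also have "\<dots> = 1 / real (Suc n)" by (simp only: alternating_sum_choose_Suc_eq_1)
  finally show ?case by simp
qed

lemma sum_nonempty_subsets_by_card:
  fixes g :: "nat \<Rightarrow> 'b::comm_semiring_1"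
  assumes A: "finite A"
  shows "(\<Sum>K \<in> Pow A - {{}}. g (card K)) = (\<Sum>k\<in>{1..card A}. of_nat (card A choose k) * g k)"
proof -
  have "(\<Sum>K \<in> Pow A - {{}}. g (card K)) =
        (\<Sum>k\<in>{1..card A}. \<Sum>K \<in> {K. K \<in> Pow A - {{}} \<and> card K = k}. g (card K))"
  proof (rule sum.group[symmetric])
    show "card ` (Pow A - {{}}) \<subseteq> {1..card A}"
      using A by (auto simp: card_mono Suc_le_eq card_gt_0_iff dest: finite_subset)
  qed (use A in auto)
  also have "\<dots> = (\<Sum>k\<in>{1..card A}. of_nat (card A choose k) * g k)"
  proof (rule sum.cong)
    fix k assume k: "k \<in> {1..card A}"
    have "{K. K \<in> Pow A - {{}} \<and> card K = k} = {B. B \<subseteq> A \<and> card B = k}"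
      using k by auto
    then show "(\<Sum>K \<in> {K. K \<in> Pow A - {{}} \<and> card K = k}. g (card K)) = of_nat (card A choose k) * g k"
      using n_subsets[OF A, of k] by simp
  qed simp
  finally show ?thesis .
qed

lemma alternating_sum_inverse_card_subsets:
  assumes A: "finite A"
  shows "(\<Sum>K \<in> Pow A - {{}}. (-1::real) ^ (card K + 1) * (1 / real (card K)))
         = (\<Sum>j = 1..card A. 1 / real j)"
proof -
  have "(\<Sum>K \<in> Pow A - {{}}. (-1::real) ^ (card K + 1) * (1 / real (card K)))
      = (\<Sum>k\<in>{1..card A}. real (card A choose k) * ((-1::real) ^ (k + 1) * (1 / real k)))"
    by (rule sum_nonempty_subsets_by_card[OF A])
  also have "\<dots> = (\<Sum>k<card A. (-1::real) ^ k * real (card A choose Suc k) / real (Suc k))"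
    by (simp add: sum.atLeast1_atMost_eq mult.commute)
  also have "\<dots> = (\<Sum>k<card A. 1 / real (Suc k))" by (rule alternating_binomial_sum_eq_harmonic)
  also have "\<dots> = (\<Sum>j = 1..card A. 1 / real j)"
    by (simp add: sum.atLeast1_atMost_eq)
  finally show ?thesis .
qed

section \<open>The integral of the maximal coordinate\<close>

lemma has_bochner_integral_Min_on_simplex:
  assumes A: "finite A" and K: "K \<subseteq> A" "K \<noteq> {}"
  defines "M \<equiv> Pi\<^sub>M A (\<lambda>_. lborel :: real measure)"
  shows "has_bochner_integral M (\<lambda>x. indicator (floored_simplex A {} 0 1 \<inter> space M) x * Min (x ` K))
           (1 / (card K * fact (Suc (card A))))"
proof (rule has_bochner_integral_nn_integral)
  let ?S = "floored_simplex A {} 0 1 \<inter> space M"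
  have [measurable]: "?S \<in> sets M"
    unfolding M_def using A by (intro sets_floored_simplex) auto
  have "finite K" using K A finite_subset by auto
  then have [measurable]: "(\<lambda>x. Min (x ` K)) \<in> borel_measurable M"
    unfolding M_def by measurable (use K in auto)
  show "(\<lambda>x. indicator ?S x * Min (x ` K)) \<in> borel_measurable M"
    by measurable
  have "0 \<le> indicator ?S x * Min (x ` K)" for x
    using K \<open>finite K\<close> by (auto simp: indicator_def floored_simplex_def Min_ge_iff)
  then show "AE x in M. 0 \<le> indicator ?S x * Min (x ` K)"
    by simp
  have "(\<integral>\<^sup>+x. ennreal (indicator ?S x * Min (x ` K)) \<partial>M) = (\<integral>\<^sup>+x. indicator ?S x * ennreal (Min (x ` K)) \<partial>M)"
    by (intro nn_integral_cong) (auto simp: indicator_def)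
  also have "\<dots> = ennreal (1 / (card K * fact (Suc (card A))))"
    unfolding M_def by (rule nn_integral_Min_on_simplex[OF A K])
  finally show "(\<integral>\<^sup>+x. ennreal (indicator ?S x * Min (x ` K)) \<partial>M) = ennreal (1 / (card K * fact (Suc (card A))))" .
qed simp

lemma has_bochner_integral_Max_on_simplex:
  assumes A: "finite A" "A \<noteq> {}"
  defines "M \<equiv> Pi\<^sub>M A (\<lambda>_. lborel :: real measure)"
  shows "has_bochner_integral M (\<lambda>x. indicator (floored_simplex A {} 0 1 \<inter> space M) x * Max (x ` A))
           (1 / fact (Suc (card A)) * (\<Sum>j = 1..card A. 1 / real j))"
proof -
  let ?S = "floored_simplex A {} 0 1 \<inter> space M"
  define c :: "'a set \<Rightarrow> real" where "c = (\<lambda>K. (-1) ^ (card K + 1))"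
  have "has_bochner_integral M (\<lambda>x. \<Sum>K \<in> Pow A - {{}}. c K * (indicator ?S x * Min (x ` K)))
          (\<Sum>K \<in> Pow A - {{}}. c K * (1 / (card K * fact (Suc (card A)))))"
    unfolding M_def using A(1)
    by (intro has_bochner_integral_sum has_bochner_integral_mult_right has_bochner_integral_Min_on_simplex) auto
  moreover have "(\<Sum>K \<in> Pow A - {{}}. c K * (indicator ?S x * Min (x ` K))) = indicator ?S x * Max (x ` A)" for x
    using Max_eq_alternating_sum_Min[OF A, of x] by (simp add: c_def sum_distrib_left algebra_simps)
  moreover have "(\<Sum>K \<in> Pow A - {{}}. c K * (1 / (card K * fact (Suc (card A)))))
                   = 1 / fact (Suc (card A)) * (\<Sum>K \<in> Pow A - {{}}. c K * (1 / card K))"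
    unfolding sum_distrib_left by (rule sum.cong) (simp_all del: fact_Suc)
  ultimately show ?thesis
    unfolding c_def alternating_sum_inverse_card_subsets[OF A(1)] by simp
qed

lemma has_integral_of_has_bochner_integral_PiM_Basis:
  fixes h :: "'a::euclidean_space \<Rightarrow> real"
  assumes "h \<in> borel_measurable borel"
    and "has_bochner_integral (Pi\<^sub>M Basis (\<lambda>_. lborel)) (\<lambda>f. h (\<Sum>b\<in>Basis. f b *\<^sub>R b)) R"
  shows "(h has_integral R) UNIV"
proof -
  have "has_bochner_integral lborel h R"
    by (subst lborel_eq) (rule has_bochner_integral_distr[OF assms(1) _ assms(2)], measurable)
  then show ?thesis
    using has_integral_integral_lborel by (auto simp: has_bochner_integral_iff)
qed

lemma Basis_vec_real: "(Basis :: (real ^ 'n::finite) set) = range (\<lambda>i. axis i 1)"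
  by (auto simp: Basis_vec_def)

lemma sum_Basis_vec_real:
  "sum f (Basis :: (real ^ 'n::finite) set) = (\<Sum>i\<in>UNIV. f (axis i 1))"
proof -
  have "inj (\<lambda>i::'n. axis i (1::real))"
    by (auto simp: inj_def axis_eq_axis)
  then show ?thesis
    unfolding Basis_vec_real by (subst sum.reindex) (simp_all add: comp_def)
qed

lemma sum_Basis_scaleR_nth:
  fixes f :: "real ^ 'n::finite \<Rightarrow> real"
  shows "(\<Sum>b\<in>Basis. f b *\<^sub>R b) $ i = f (axis i 1)"
proof -
  have "(\<Sum>b\<in>Basis. f b *\<^sub>R b) $ i = (\<Sum>j\<in>UNIV. if j = i then f (axis j 1) else 0)"
    unfolding sum_Basis_vec_real sum_component by (intro sum.cong) (auto simp: axis_def)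
  then show ?thesis by simp
qed

lemma closed_std_simplex: "closed (std_simplex :: (real ^ 'n::finite) set)"
proof -
  have "(std_simplex :: (real ^ 'n) set) = (\<Inter>i. {x. 0 \<le> x $ i}) \<inter> {x. (\<Sum>i\<in>UNIV. x $ i) \<le> 1}"
    by (auto simp: std_simplex_def)
  also have "closed \<dots>"
    by (intro closed_Int closed_INT ballI closed_Collect_le continuous_intros)
  finally show ?thesis .
qed

lemma compact_std_simplex: "compact (std_simplex :: (real ^ 'n::finite) set)"
proof -
  have "x $ i \<le> 1" if x: "x \<in> std_simplex" for x :: "real ^ 'n" and i
  proof -
    have "x $ i \<le> (\<Sum>j\<in>UNIV. x $ j)"
      using x by (intro member_le_sum) (auto simp: std_simplex_def)
    then show ?thesis using x by (simp add: std_simplex_def)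
  qed
  then have "std_simplex \<subseteq> cbox (0 :: real ^ 'n) 1"
    by (auto simp: std_simplex_def mem_box_cart)
  then show ?thesis
    using closed_std_simplex bounded_subset[OF bounded_cbox] by (auto simp: compact_eq_bounded_closed)
qed

lemma vmax_has_integral_std_simplex:
  "(vmax has_integral 1 / fact (CARD('n) + 1) * (\<Sum>j = 1..CARD('n). 1 / real j))
     (std_simplex :: (real ^ 'n::finite) set)"
proof -
  define R where "R = 1 / fact (CARD('n) + 1) * (\<Sum>j = 1..CARD('n). 1 / real j)"
  define T where "T = (\<lambda>f. \<Sum>b\<in>(Basis :: (real ^ 'n) set). f b *\<^sub>R b)"
  have T_in_std_simplex: "T f \<in> std_simplex \<longleftrightarrow> f \<in> floored_simplex Basis {} 0 1" for f
    unfolding T_def std_simplex_def floored_simplex_def mem_Collect_eq sum_Basis_scaleR_nth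
    by (simp only: sum_Basis_vec_real) (simp add: Basis_vec_real)
  have vmax_T: "vmax (T f) = Max (f ` Basis)" for f
    unfolding T_def vmax_def sum_Basis_scaleR_nth by (simp add: Basis_vec_real image_image)
  have "(vmax :: real ^ 'n \<Rightarrow> real) \<in> borel_measurable borel"
    unfolding vmax_def by (rule borel_measurable_Max) auto
  then have "(\<lambda>x :: real ^ 'n. indicator std_simplex x * vmax x) \<in> borel_measurable borel"
    using closed_std_simplex by (intro borel_measurable_times borel_measurable_indicator borel_closed)
  moreover have "has_bochner_integral (Pi\<^sub>M Basis (\<lambda>_. lborel))
                   (\<lambda>f. indicator std_simplex (T f) * vmax (T f)) R"
    using has_bochner_integral_Max_on_simplex[of "Basis :: (real ^ 'n) set"]
    by (rule has_bochner_integral_cong[THEN iffD1, rotated -1])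
       (auto simp: indicator_def T_in_std_simplex vmax_T R_def)
  ultimately have "((\<lambda>x. indicator std_simplex x * vmax x) has_integral R) (UNIV :: (real ^ 'n) set)"
    unfolding T_def by (rule has_integral_of_has_bochner_integral_PiM_Basis)
  then have "((\<lambda>x. if x \<in> std_simplex then vmax x else 0) has_integral R) (UNIV :: (real ^ 'n) set)"
    by (rule has_integral_eq[rotated]) (simp add: indicator_def)
  then show ?thesis
    unfolding R_def has_integral_restrict_UNIV .
qed

section \<open>The logarithmic mean of exponentials\<close>

lemma integrable_on_compact_continuous:
  fixes f :: "'a::euclidean_space \<Rightarrow> real"
  assumes S: "compact S" and f: "continuous_on S f"
  shows "f integrable_on S"
proof -
  have "S \<in> lmeasurable"
    using S by (rule lmeasurable_compact)
  obtain B where B: "\<And>x. x \<in> S \<Longrightarrow> norm (f x) \<le> B"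
    using compact_imp_bounded[OF compact_continuous_image[OF f S]] by (auto simp: bounded_iff)
  have "f absolutely_integrable_on S"
  proof (rule measurable_bounded_by_integrable_imp_absolutely_integrable)
    show "f \<in> borel_measurable (lebesgue_on S)"
      using \<open>S \<in> lmeasurable\<close> f by (intro continuous_imp_measurable_on_sets_lebesgue) auto
    show "S \<in> sets lebesgue"
      using \<open>S \<in> lmeasurable\<close> by (rule fmeasurableD)
    show "(\<lambda>x. B) integrable_on S"
      using \<open>S \<in> lmeasurable\<close> by (rule integrable_on_const)
  qed (use B in auto)
  then show ?thesis
    by (simp add: absolutely_integrable_on_def)
qed

lemma tendsto_integral_div_at_top:
  fixes f :: "real \<Rightarrow> 'a::euclidean_space \<Rightarrow> real"
  assumes S: "S \<in> lmeasurable" and f: "\<And>u. f u integrable_on S" and g: "g integrable_on S"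
    and bound: "\<And>u x. 0 < u \<Longrightarrow> x \<in> S \<Longrightarrow> \<bar>f u x - u * g x\<bar> \<le> C"
  shows "((\<lambda>u. (1 / u) * integral S (f u)) \<longlongrightarrow> integral S g) at_top"
proof -
  define V where "V = integral S (\<lambda>x. C)"
  have estimate: "norm ((1 / u) * integral S (f u) - integral S g) \<le> V / u" if u: "0 < u" for u
  proof -
    have ug: "(\<lambda>x. u * g x) integrable_on S"
      using integrable_on_cmult_left[OF g, of u] by simp
    have "(1 / u) * integral S (f u) - integral S g = (1 / u) * (integral S (f u) - u * integral S g)"
      using u by (simp add: field_simps)
    also have "integral S (f u) - u * integral S g = integral S (\<lambda>x. f u x - u * g x)"
      using f ug by (simp add: integral_diff)
    finally have "norm ((1 / u) * integral S (f u) - integral S g) = norm (integral S (\<lambda>x. f u x - u * g x)) / u"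
      using u by (simp add: abs_mult)
    also have "norm (integral S (\<lambda>x. f u x - u * g x)) \<le> V"
      unfolding V_def using f ug bound[OF u] integrable_on_const[OF S]
      by (intro integral_norm_bound_integral integrable_diff) auto
    finally show ?thesis
      using u by (simp add: divide_right_mono)
  qed
  have "((\<lambda>u. (1 / u) * integral S (f u) - integral S g) \<longlongrightarrow> 0) at_top"
  proof (rule Lim_null_comparison)
    show "\<forall>\<^sub>F u in at_top. norm ((1 / u) * integral S (f u) - integral S g) \<le> V / u"
      using eventually_gt_at_top[of 0] by eventually_elim (rule estimate)
    show "((\<lambda>u. V / u) \<longlongrightarrow> 0) at_top"
      by (intro tendsto_divide_0[OF tendsto_const] filterlim_at_top_imp_at_infinity filterlim_ident)
  qed
  then show ?thesis
    by (simp add: Lim_null[symmetric])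
qed

lemma ln_sum_exp_bounds:
  fixes a :: "'a \<Rightarrow> real"
  assumes I: "finite I" and j: "j \<in> I" "m \<le> a j" and M: "\<And>i. i \<in> I \<Longrightarrow> a i \<le> M"
  shows "m \<le> ln (\<Sum>i\<in>I. exp (a i))" and "ln (\<Sum>i\<in>I. exp (a i)) \<le> M + ln (card I)"
proof -
  have "exp m \<le> exp (a j)"
    using j by simp
  also have "\<dots> \<le> (\<Sum>i\<in>I. exp (a i))"
    using I j by (intro member_le_sum) auto
  finally have lower: "exp m \<le> (\<Sum>i\<in>I. exp (a i))" .
  then have pos: "0 < (\<Sum>i\<in>I. exp (a i))"
    by (rule less_le_trans[OF exp_gt_zero])
  show "m \<le> ln (\<Sum>i\<in>I. exp (a i))"
    using lower pos by (simp add: ln_ge_iff)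
  have "(\<Sum>i\<in>I. exp (a i)) \<le> card I * exp M"
    using M by (intro sum_bounded_above) simp
  then have "ln (\<Sum>i\<in>I. exp (a i)) \<le> ln (card I * exp M)"
    using pos by simp
  also have "\<dots> = M + ln (card I)"
    using I j by (subst ln_mult) (auto simp: card_gt_0_iff)
  finally show "ln (\<Sum>i\<in>I. exp (a i)) \<le> M + ln (card I)" .
qed

lemma ln_mean_exp_minus_vmax_bound:
  fixes v x :: "real ^ 'n::finite"
  assumes u: "0 \<le> u"
  shows "\<bar>ln ((1 / real CARD('n)) * (\<Sum>j\<in>UNIV. exp (u * x $ j + v $ j))) - u * vmax x\<bar>
           \<le> ln (real CARD('n)) + norm v"
proof -
  define s where "s = (\<Sum>j\<in>UNIV. exp (u * x $ j + v $ j))"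
  have "vmax x \<in> range (($) x)"
    unfolding vmax_def by (rule Max_in) auto
  then obtain j where j: "x $ j = vmax x"
    by auto
  have upper: "u * x $ i + v $ i \<le> u * vmax x + norm v" for i
  proof -
    have "x $ i \<le> vmax x"
      unfolding vmax_def by (rule Max_ge) auto
    then show ?thesis
      using mult_left_mono[OF _ u] component_le_norm_cart[of v i] by (smt (verit))
  qed
  have lower: "u * vmax x - norm v \<le> u * x $ j + v $ j"
    using j component_le_norm_cart[of v j] by simp
  have "u * vmax x - norm v \<le> ln s" "ln s \<le> u * vmax x + norm v + ln CARD('n)"
    unfolding s_def
    using ln_sum_exp_bounds[of UNIV j "u * vmax x - norm v" "\<lambda>i. u * x $ i + v $ i", OF _ _ lower upper]
    by simp_all
  moreover have "0 < s"
    unfolding s_def by (intro sum_pos) auto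
  then have "ln ((1 / real CARD('n)) * s) = ln s - ln CARD('n)"
    by (simp add: ln_div)
  moreover have "0 \<le> ln (real CARD('n))"
    by (simp add: Suc_le_eq)
  ultimately show ?thesis
    unfolding s_def by linarith
qed

theorem lemma7:
  fixes v :: "real ^ 'n::finite"
  shows "((\<lambda>u. (1 / u) * integral std_simplex
              (\<lambda>x. ln ((1 / real CARD('n)) * (\<Sum>j\<in>UNIV. exp (u * x $ j + v $ j)))))
           \<longlongrightarrow> integral (std_simplex :: (real ^ 'n) set) vmax) at_top
       \<and> (vmax has_integral
            (1 / fact (CARD('n) + 1)) * (\<Sum>j = 1..CARD('n). 1 / real j)) (std_simplex :: (real ^ 'n) set)"
proof
  show "(vmax has_integral (1 / fact (CARD('n) + 1)) * (\<Sum>j = 1..CARD('n). 1 / real j))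
          (std_simplex :: (real ^ 'n) set)"
    by (rule vmax_has_integral_std_simplex)
  then have "vmax integrable_on (std_simplex :: (real ^ 'n) set)"
    by blast
  moreover have "(\<lambda>x. ln ((1 / real CARD('n)) * (\<Sum>j\<in>UNIV. exp (u * x $ j + v $ j))))
                   integrable_on (std_simplex :: (real ^ 'n) set)" for u
  proof (rule integrable_on_compact_continuous[OF compact_std_simplex])
    have "(\<Sum>j\<in>UNIV. exp (u * x $ j + v $ j)) \<noteq> 0" for x :: "real ^ 'n"
      by (simp add: sum_nonneg_eq_0_iff)
    then show "continuous_on std_simplex
                 (\<lambda>x. ln ((1 / real CARD('n)) * (\<Sum>j\<in>UNIV. exp (u * x $ j + v $ j))))"
      by (intro continuous_intros) auto
  qed
  ultimately show "((\<lambda>u. (1 / u) * integral std_simplex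
                     (\<lambda>x. ln ((1 / real CARD('n)) * (\<Sum>j\<in>UNIV. exp (u * x $ j + v $ j)))))
                  \<longlongrightarrow> integral (std_simplex :: (real ^ 'n) set) vmax) at_top"
    using lmeasurable_compact[OF compact_std_simplex] ln_mean_exp_minus_vmax_bound[of _ _ v]
    by (intro tendsto_integral_div_at_top[where C = "ln CARD('n) + norm v"]) auto
qed

end
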